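(* Every closed interval $[a,b]$ in $\overline{\mathbb{R}}$ (with $a<b$ in $\overline{\mathbb{R}}$) is the set of right hand sequential secant derivatives at $0$ of some continuous function $f:[0,1]\to\mathbb{R}$.
   Context: $\overline{\mathbb{R}}=\mathbb{R}\cup\{\pm\infty\}$, and $[a,b]=\{t\in\overline{\mathbb{R}}:a\le t\le b\}$. $L\in\overline{\mathbb{R}}$ is a right hand sequential secant derivative of $f$ at $0$ if there is a sequence $h_n>0$ with $h_n\to0$ and $\frac{f(h_n)-f(0)}{h_n}\to L$ as $n\to\infty$. *)

theory Defs
  imports "HOL-Analysis.Analysis"
begin

text \<open>The set of right hand sequential secant derivatives of f at 0 (values in the
extended reals). The sequence h n is required to lie in the domain (0,1] of f.\<close>
definition rhs_secant_derivs :: "(real \<Rightarrow> real) \<Rightarrow> ereal set" where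
  "rhs_secant_derivs f = {L. \<exists>h :: nat \<Rightarrow> real. (\<forall>n. 0 < h n \<and> h n \<le> 1) \<and> h \<longlonglongrightarrow> 0 \<and>
       ((\<lambda>n. ereal ((f (h n) - f 0) / h n)) \<longlonglongrightarrow> L)}"

end

theory Submission
  imports Defs "HOL-Real_Asymp.Real_Asymp"
begin

(* For f x = x * g x the secant quotients at 0 are the values of g, so it suffices to find g,
   continuous on (0,1] with x * g x \<longrightarrow> 0, whose sequential limits at 0+ fill [a,b].
   Clamping a and b into [-1/sqrt x, 1/sqrt x] gives continuous envelopes A \<le> B tending to a and b
   that grow slowly enough for x * g x \<longrightarrow> 0, and g sweeps from A to B with weight (1 + sin (1/x))/2.
   Every limit of g lies between a and b; the endpoints are attained along the points where
   sin (1/x) = \<plusminus>1, and each intermediate value is hit, by the intermediate value theorem,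
   between two such points. *)

definition sequential_limits_at_right_0 :: "(real \<Rightarrow> real) \<Rightarrow> ereal set" where
  "sequential_limits_at_right_0 g = {L. \<exists>h :: nat \<Rightarrow> real. (\<forall>n. 0 < h n \<and> h n \<le> 1) \<and>
       h \<longlonglongrightarrow> 0 \<and> ((\<lambda>n. ereal (g (h n))) \<longlonglongrightarrow> L)}"

lemma rhs_secant_derivs_times:
  "rhs_secant_derivs (\<lambda>x. x * g x) = sequential_limits_at_right_0 g"
proof -
  have "(\<lambda>n. ereal ((h n * g (h n) - 0 * g 0) / h n)) = (\<lambda>n. ereal (g (h n)))"
    if "\<forall>n. 0 < h n \<and> h n \<le> 1" for h :: "nat \<Rightarrow> real"
    using that by (simp add: fun_eq_iff order_less_imp_not_eq2)
  then show ?thesis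
    unfolding rhs_secant_derivs_def sequential_limits_at_right_0_def
    by (intro Collect_cong ex_cong1 conj_cong refl) auto
qed

lemma filterlim_at_right_0_sequentially:
  fixes h :: "nat \<Rightarrow> real"
  assumes "\<forall>n. 0 < h n" and "h \<longlonglongrightarrow> 0"
  shows "filterlim h (at_right 0) sequentially"
  using assms by (auto simp: filterlim_at order_less_imp_not_eq2 intro!: always_eventually)

lemma sequential_limits_at_right_0_subset:
  assumes "\<And>x. 0 < x \<Longrightarrow> A x \<le> g x \<and> g x \<le> B x"
    and "((\<lambda>x. ereal (A x)) \<longlongrightarrow> a) (at_right 0)"
    and "((\<lambda>x. ereal (B x)) \<longlongrightarrow> b) (at_right 0)"
  shows "sequential_limits_at_right_0 g \<subseteq> {a..b}"
proof
  fix L assume "L \<in> sequential_limits_at_right_0 g"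
  then obtain h where h: "\<forall>n. 0 < h n \<and> h n \<le> 1" "h \<longlonglongrightarrow> 0"
    and L: "(\<lambda>n. ereal (g (h n))) \<longlonglongrightarrow> L"
    unfolding sequential_limits_at_right_0_def by blast
  have h_right: "filterlim h (at_right 0) sequentially"
    using h by (simp add: filterlim_at_right_0_sequentially)
  have "a \<le> L"
    by (rule tendsto_le[OF _ L filterlim_compose[OF assms(2) h_right]])
       (use h assms(1) in \<open>auto intro: always_eventually\<close>)
  moreover have "L \<le> b"
    by (rule tendsto_le[OF _ filterlim_compose[OF assms(3) h_right] L])
       (use h assms(1) in \<open>auto intro: always_eventually\<close>)
  ultimately show "L \<in> {a..b}" by simp
qed

lemma interval_subset_sequential_limits_at_right_0:
  assumes cont: "continuous_on {0<..1} g"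
    and uv: "\<forall>n. 0 < u n \<and> u n \<le> v n \<and> v n \<le> 1" and "u \<longlonglongrightarrow> 0" "v \<longlonglongrightarrow> 0"
    and a: "(\<lambda>n. ereal (g (u n))) \<longlonglongrightarrow> a" and b: "(\<lambda>n. ereal (g (v n))) \<longlonglongrightarrow> b"
  shows "{a..b} \<subseteq> sequential_limits_at_right_0 g"
proof
  fix L assume L: "L \<in> {a..b}"
  consider "L = a" | "L = b" | "a < L" "L < b"
    using L by (auto simp: order.order_iff_strict)
  then show "L \<in> sequential_limits_at_right_0 g"
  proof cases
    case 1
    have "\<forall>n. 0 < u n \<and> u n \<le> 1"
      using uv by (meson order_trans)
    then show ?thesis
      using 1 \<open>u \<longlonglongrightarrow> 0\<close> a unfolding sequential_limits_at_right_0_def by blast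
  next
    case 2
    have "\<forall>n. 0 < v n \<and> v n \<le> 1"
      using uv by (meson less_le_trans)
    then show ?thesis
      using 2 \<open>v \<longlonglongrightarrow> 0\<close> b unfolding sequential_limits_at_right_0_def by blast
  next
    case 3
    then obtain l where l: "L = ereal l" by (cases L) auto
    have "\<forall>\<^sub>F n in sequentially. ereal (g (u n)) < L \<and> L < ereal (g (v n))"
      using order_tendstoD(2)[OF a \<open>a < L\<close>] order_tendstoD(1)[OF b \<open>L < b\<close>]
      by eventually_elim simp
    then obtain N where N: "\<And>n. N \<le> n \<Longrightarrow> g (u n) < l \<and> l < g (v n)"
      unfolding eventually_sequentially l by auto
    have "\<exists>x. u (n + N) \<le> x \<and> x \<le> v (n + N) \<and> g x = l" for n
    proof (rule IVT')
      show "continuous_on {u (n + N)..v (n + N)} g"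
        using uv[rule_format, of "n + N"] by (intro continuous_on_subset[OF cont]) auto
    qed (use N uv in \<open>auto intro: less_imp_le\<close>)
    then obtain h where h: "\<And>n. u (n + N) \<le> h n \<and> h n \<le> v (n + N) \<and> g (h n) = l"
      by metis
    have "h \<longlonglongrightarrow> 0"
      by (rule tendsto_sandwich[of "\<lambda>n. u (n + N)" _ _ "\<lambda>n. v (n + N)"])
         (use h \<open>u \<longlonglongrightarrow> 0\<close> \<open>v \<longlonglongrightarrow> 0\<close> in
           \<open>auto intro: always_eventually LIMSEQ_ignore_initial_segment\<close>)
    moreover have "0 < h n \<and> h n \<le> 1" for n
      using h[of n] uv by (meson less_le_trans order_trans)
    ultimately show ?thesis
      unfolding sequential_limits_at_right_0_def l using h by (intro CollectI exI[of _ h]) auto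
  qed
qed

lemma continuous_on_times_vanishing_at_0:
  fixes g :: "real \<Rightarrow> real"
  assumes "continuous_on {0<..} g" and "((\<lambda>x. x * g x) \<longlongrightarrow> 0) (at_right 0)"
  shows "continuous_on {0..1} (\<lambda>x. x * g x)"
  unfolding continuous_on_eq_continuous_within
proof
  fix x :: real assume x: "x \<in> {0..1}"
  show "continuous (at x within {0..1}) (\<lambda>x. x * g x)"
  proof (cases "x = 0")
    case True
    then show ?thesis
      using assms(2) by (simp add: continuous_within at_within_Icc_at_right[OF zero_less_one])
  next
    case False
    then have "isCont g x"
      using x assms(1) continuous_on_eq_continuous_at[of "{0<..}" g] by simp
    then show ?thesis
      using continuous_mult[OF continuous_ident] continuous_at_imp_continuous_within by blast
  qed
qed

definition clamp_ereal :: "real \<Rightarrow> ereal \<Rightarrow> real" where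
  "clamp_ereal s c = (case c of ereal r \<Rightarrow> max (- s) (min s r) | PInfty \<Rightarrow> s | MInfty \<Rightarrow> - s)"

lemma clamp_ereal_mono: "c \<le> d \<Longrightarrow> 0 \<le> s \<Longrightarrow> clamp_ereal s c \<le> clamp_ereal s d"
  by (cases c; cases d) (auto simp: clamp_ereal_def)

lemma abs_clamp_ereal_le: "0 \<le> s \<Longrightarrow> \<bar>clamp_ereal s c\<bar> \<le> s"
  by (cases c) (auto simp: clamp_ereal_def)

lemma continuous_on_clamp_ereal [continuous_intros]:
  "continuous_on S s \<Longrightarrow> continuous_on S (\<lambda>x. clamp_ereal (s x) c)"
  by (cases c) (auto simp: clamp_ereal_def intro!: continuous_intros)

lemma tendsto_clamp_ereal:
  assumes "filterlim s at_top F"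
  shows "((\<lambda>x. ereal (clamp_ereal (s x) c)) \<longlongrightarrow> c) F"
proof (cases c)
  case (real r)
  have "\<forall>\<^sub>F x in F. \<bar>r\<bar> \<le> s x"
    using assms by (simp add: filterlim_at_top)
  then have "\<forall>\<^sub>F x in F. ereal (clamp_ereal (s x) c) = c"
    by eventually_elim (auto simp: clamp_ereal_def real)
  then show ?thesis
    by (rule tendsto_eventually)
next
  case PInf
  then show ?thesis
    using assms by (simp add: clamp_ereal_def tendsto_PInfty_eq_at_top)
next
  case MInf
  then show ?thesis
    using assms ereal_tendsto_simps2(3)[of "\<lambda>x. - s x"]
    by (simp add: clamp_ereal_def comp_def filterlim_uminus_at_top)
qed

lemma tendsto_mult_at_right_0_inverse_sqrt_bounded:
  fixes g :: "real \<Rightarrow> real"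
  assumes "\<And>x. 0 < x \<Longrightarrow> \<bar>g x\<bar> \<le> 1 / sqrt x"
  shows "((\<lambda>x. x * g x) \<longlongrightarrow> 0) (at_right 0)"
proof (rule Lim_null_comparison)
  have "\<bar>x * g x\<bar> \<le> sqrt x" if "0 < x" for x
  proof -
    have "\<bar>x * g x\<bar> \<le> x * (1 / sqrt x)"
      using that assms[OF that] mult_left_mono[of "\<bar>g x\<bar>" "1 / sqrt x" x] by (simp add: abs_mult)
    also have "\<dots> = sqrt x"
      using that by (simp add: real_div_sqrt)
    finally show ?thesis .
  qed
  then show "\<forall>\<^sub>F x in at_right 0. norm (x * g x) \<le> sqrt x"
    using eventually_at_right_less by (force elim: eventually_mono)
  show "(sqrt \<longlongrightarrow> 0) (at_right 0)"
    by real_asymp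
qed

definition oscillate_between :: "(real \<Rightarrow> real) \<Rightarrow> (real \<Rightarrow> real) \<Rightarrow> real \<Rightarrow> real" where
  "oscillate_between A B x = A x + (B x - A x) * (1 + sin (1 / x)) / 2"

lemma oscillate_between_bounds:
  assumes "A x \<le> B x"
  shows "A x \<le> oscillate_between A B x \<and> oscillate_between A B x \<le> B x"
proof -
  have "0 \<le> 1 + sin (1 / x)"
    using sin_ge_minus_one[of "1 / x"] by linarith
  then have "0 \<le> (B x - A x) * (1 + sin (1 / x))"
    using assms by simp
  moreover have "(B x - A x) * (1 + sin (1 / x)) \<le> (B x - A x) * 2"
    using assms sin_le_one[of "1 / x"] by (intro mult_left_mono) auto
  ultimately show ?thesis
    by (simp add: oscillate_between_def)
qed

lemma abs_oscillate_between_le: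
  assumes "A x \<le> B x" and "\<bar>A x\<bar> \<le> s" and "\<bar>B x\<bar> \<le> s"
  shows "\<bar>oscillate_between A B x\<bar> \<le> s"
  using oscillate_between_bounds[of A x B] assms by linarith

lemma continuous_on_oscillate_between:
  "continuous_on {0<..} A \<Longrightarrow> continuous_on {0<..} B \<Longrightarrow>
    continuous_on {0<..} (oscillate_between A B)"
  unfolding oscillate_between_def by (auto intro!: continuous_intros)

lemma sin_inverse_extremal_sequences:
  obtains u v :: "nat \<Rightarrow> real"
  where "\<forall>n. 0 < u n \<and> u n \<le> v n \<and> v n \<le> 1" and "u \<longlonglongrightarrow> 0" and "v \<longlonglongrightarrow> 0"
    and "\<forall>n. sin (1 / u n) = -1" and "\<forall>n. sin (1 / v n) = 1"
proof
  define u :: "nat \<Rightarrow> real" where "u n = 1 / (3 / 2 * pi + 2 * real n * pi)" for n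
  define v :: "nat \<Rightarrow> real" where "v n = 1 / (pi / 2 + 2 * real n * pi)" for n
  show "\<forall>n. 0 < u n \<and> u n \<le> v n \<and> v n \<le> 1"
  proof
    fix n
    define d where "d = pi / 2 + 2 * real n * pi"
    have "0 \<le> 2 * real n * pi"
      by simp
    then have "1 \<le> d"
      using pi_gt3 unfolding d_def by linarith
    moreover have "u n = 1 / (d + pi)" "v n = 1 / d"
      by (simp_all add: u_def v_def d_def algebra_simps)
    ultimately show "0 < u n \<and> u n \<le> v n \<and> v n \<le> 1"
      using pi_gt_zero by (simp add: frac_le add_pos_pos)
  qed
  show "u \<longlonglongrightarrow> 0" "v \<longlonglongrightarrow> 0"
    unfolding u_def v_def by real_asymp+
  have "1 / u n = 3 / 2 * pi + 2 * real n * pi" "1 / v n = pi / 2 + 2 * real n * pi" for n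
    by (simp_all add: u_def v_def)
  then show "\<forall>n. sin (1 / u n) = -1" "\<forall>n. sin (1 / v n) = 1"
    by (simp_all only: sin_add sin_3over2_pi cos_3over2_pi sin_pi_half cos_pi_half sin_2npi cos_2npi)
      simp_all
qed

lemma sequential_limits_oscillate_between:
  assumes cont: "continuous_on {0<..} A" "continuous_on {0<..} B"
    and le: "\<And>x. 0 < x \<Longrightarrow> A x \<le> B x"
    and lim: "((\<lambda>x. ereal (A x)) \<longlongrightarrow> a) (at_right 0)" "((\<lambda>x. ereal (B x)) \<longlongrightarrow> b) (at_right 0)"
  shows "sequential_limits_at_right_0 (oscillate_between A B) = {a..b}"
proof
  show "sequential_limits_at_right_0 (oscillate_between A B) \<subseteq> {a..b}"
    using le oscillate_between_bounds by (intro sequential_limits_at_right_0_subset[OF _ lim]) blast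
  obtain u v :: "nat \<Rightarrow> real"
    where uv: "\<forall>n. 0 < u n \<and> u n \<le> v n \<and> v n \<le> 1" and "u \<longlonglongrightarrow> 0" "v \<longlonglongrightarrow> 0"
      and sin_u: "\<forall>n. sin (1 / u n) = -1" and sin_v: "\<forall>n. sin (1 / v n) = 1"
    by (rule sin_inverse_extremal_sequences)
  have "filterlim u (at_right 0) sequentially" "filterlim v (at_right 0) sequentially"
    using uv \<open>u \<longlonglongrightarrow> 0\<close> \<open>v \<longlonglongrightarrow> 0\<close>
    by (auto intro: filterlim_at_right_0_sequentially less_le_trans)
  then have "(\<lambda>n. ereal (A (u n))) \<longlonglongrightarrow> a" "(\<lambda>n. ereal (B (v n))) \<longlonglongrightarrow> b"
    using filterlim_compose lim by blast+
  moreover have "oscillate_between A B (u n) = A (u n)" "oscillate_between A B (v n) = B (v n)" for n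
    using sin_u sin_v by (simp_all add: oscillate_between_def field_simps)
  moreover have "continuous_on {0<..1} (oscillate_between A B)"
    by (rule continuous_on_subset[OF continuous_on_oscillate_between[OF cont]]) auto
  ultimately show "{a..b} \<subseteq> sequential_limits_at_right_0 (oscillate_between A B)"
    using interval_subset_sequential_limits_at_right_0[OF _ uv \<open>u \<longlonglongrightarrow> 0\<close> \<open>v \<longlonglongrightarrow> 0\<close>]
    by simp
qed

theorem theorem2p7:
  fixes a b :: ereal
  assumes "a < b"
  shows "\<exists>f :: real \<Rightarrow> real. continuous_on {0..1} f \<and> rhs_secant_derivs f = {a..b}"
proof -
  define A where "A x = clamp_ereal (1 / sqrt x) a" for x
  define B where "B x = clamp_ereal (1 / sqrt x) b" for x
  define g where "g = oscillate_between A B"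
  have cont: "continuous_on {0<..} A" "continuous_on {0<..} B"
    unfolding A_def B_def by (auto intro!: continuous_intros)
  have le: "A x \<le> B x" if "0 < x" for x
    using assms that by (simp add: A_def B_def clamp_ereal_mono)
  have "filterlim (\<lambda>x. 1 / sqrt x) at_top (at_right 0)"
    by real_asymp
  then have lim: "((\<lambda>x. ereal (A x)) \<longlongrightarrow> a) (at_right 0)" "((\<lambda>x. ereal (B x)) \<longlongrightarrow> b) (at_right 0)"
    unfolding A_def B_def by (simp_all add: tendsto_clamp_ereal)
  have "\<bar>g x\<bar> \<le> 1 / sqrt x" if "0 < x" for x
    using that le[OF that] unfolding g_def
    by (intro abs_oscillate_between_le) (simp_all add: A_def B_def abs_clamp_ereal_le)
  then have "continuous_on {0..1} (\<lambda>x. x * g x)"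
    using continuous_on_oscillate_between[OF cont]
    by (simp add: g_def continuous_on_times_vanishing_at_0 tendsto_mult_at_right_0_inverse_sqrt_bounded)
  moreover have "rhs_secant_derivs (\<lambda>x. x * g x) = {a..b}"
    unfolding rhs_secant_derivs_times g_def
    by (rule sequential_limits_oscillate_between[OF cont le lim])
  ultimately show ?thesis
    by blast
qed

end
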